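(* In the $1/4$-rebate Marshallian Match, the truthful strategy profile, in which every bidder $i$ bids $b_{ij}(t)=v_{ij}$ on every asker $j$ and every asker $j$ asks $a_{ji}(t)=c_{ji}$ on every bidder $i$ at all times, is $4$-ex post stable.
   Context: Bipartite setting: bidders $i$ and askers $j$; bidder $i$ has value $v_{ij}\in\mathbb R$ for matching asker $j$ and asker $j$ has cost $c_{ji}\in\mathbb R$ for matching bidder $i$; surplus $s_{ij}=v_{ij}-c_{ji}$. $1/4$-rebate Marshallian Match: a global price $p(t)$ decreases continuously with $p(0)=+\infty$, $p(1)=0$. Each unmatched bidder $i$ maintains a bid $b_{ij}(t)\in\mathbb R$ on each feasible asker $j$, and each unmatched asker $j$ an ask $a_{ji}(t)\in\mathbb R$ on each feasible bidder $i$. As soon as an unmatched pair satisfies $b_{ij}(t)-a_{ji}(t)\ge p(t)$, they are matched and leave; the bidder pays $b_{ij}$, the asker receives $a_{ji}$, and each receives a rebate of $(b_{ij}-a_{ji})/4$. So the bidder's utility is $v_{ij}-b_{ij}+(b_{ij}-a_{ji})/4$ and the asker's is $a_{ji}-c_{ji}+(b_{ij}-a_{ji})/4$; unmatched agents get utility $0$. $k$-ex post stability: a profile $(b,a)$ is $k$-ex post stable if for every realization of types and every feasible bidder–asker pair $(i,j)$, $u_i(b,a)+u_j(b,a)\ge \frac1k s_{ij}$. *)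

theory Defs
  imports Complex_Main
begin

definition valid_price :: "(real \<Rightarrow> real) \<Rightarrow> bool" where
  "valid_price p \<longleftrightarrow> continuous_on {0<..1} p
     \<and> (\<forall>s t. 0 < s \<and> s < t \<and> t \<le> 1 \<longrightarrow> p t < p s)
     \<and> filterlim p at_top (at_right 0)
     \<and> p 1 = 0"

text \<open>A run (outcome) of the 1/4-rebate Marshallian Match.
  b i j t : bid of bidder i on asker j at time t; a j i t : ask of asker j on bidder i.
  m i = Some j : bidder i is matched with asker j, at time tau i.
  Condition 3 ("as soon as"): whenever a feasible pair clears the price at time t,
  at least one of the two has already left (been matched at a time <= t).\<close>
definition is_run ::
  "'i set \<Rightarrow> 'j set \<Rightarrow> ('i \<times> 'j) set \<Rightarrow> (real \<Rightarrow> real)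
   \<Rightarrow> ('i \<Rightarrow> 'j \<Rightarrow> real \<Rightarrow> real) \<Rightarrow> ('j \<Rightarrow> 'i \<Rightarrow> real \<Rightarrow> real)
   \<Rightarrow> ('i \<Rightarrow> 'j option) \<Rightarrow> ('i \<Rightarrow> real) \<Rightarrow> bool" where
  "is_run I J F p b a m tau \<longleftrightarrow>
     (\<forall>i j. m i = Some j \<longrightarrow> (i, j) \<in> F \<and> 0 < tau i \<and> tau i \<le> 1
              \<and> b i j (tau i) - a j i (tau i) \<ge> p (tau i))
   \<and> (\<forall>i i' j. m i = Some j \<and> m i' = Some j \<longrightarrow> i = i')
   \<and> (\<forall>i j t. (i, j) \<in> F \<and> 0 < t \<and> t \<le> 1 \<and> b i j t - a j i t \<ge> p t \<longrightarrow>
          (\<exists>j'. m i = Some j' \<and> tau i \<le> t) \<or> (\<exists>i'. m i' = Some j \<and> tau i' \<le> t))"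

definition u_bidder ::
  "('i \<Rightarrow> 'j \<Rightarrow> real) \<Rightarrow> ('i \<Rightarrow> 'j \<Rightarrow> real \<Rightarrow> real) \<Rightarrow> ('j \<Rightarrow> 'i \<Rightarrow> real \<Rightarrow> real)
   \<Rightarrow> ('i \<Rightarrow> 'j option) \<Rightarrow> ('i \<Rightarrow> real) \<Rightarrow> 'i \<Rightarrow> real" where
  "u_bidder v b a m tau i = (case m i of None \<Rightarrow> 0
     | Some j \<Rightarrow> v i j - b i j (tau i) + (b i j (tau i) - a j i (tau i)) / 4)"

definition u_asker ::
  "('j \<Rightarrow> 'i \<Rightarrow> real) \<Rightarrow> ('i \<Rightarrow> 'j \<Rightarrow> real \<Rightarrow> real) \<Rightarrow> ('j \<Rightarrow> 'i \<Rightarrow> real \<Rightarrow> real)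
   \<Rightarrow> ('i \<Rightarrow> 'j option) \<Rightarrow> ('i \<Rightarrow> real) \<Rightarrow> 'j \<Rightarrow> real" where
  "u_asker c b a m tau j = (if \<exists>i. m i = Some j then
     (let i = (THE i. m i = Some j) in
        a j i (tau i) - c j i + (b i j (tau i) - a j i (tau i)) / 4)
   else 0)"

text \<open>A strategy profile maps the realized types to bids/asks.
  k-ex post stability: for every realization of types (v, c), every run of the mechanism
  under the profile, and every feasible pair, u_i + u_j \<ge> s_ij / k.\<close>
definition ex_post_stable ::
  "real \<Rightarrow> 'i set \<Rightarrow> 'j set \<Rightarrow> ('i \<times> 'j) set \<Rightarrow> (real \<Rightarrow> real)
   \<Rightarrow> (('i \<Rightarrow> 'j \<Rightarrow> real) \<Rightarrow> ('j \<Rightarrow> 'i \<Rightarrow> real) \<Rightarrow> 'i \<Rightarrow> 'j \<Rightarrow> real \<Rightarrow> real)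
   \<Rightarrow> (('i \<Rightarrow> 'j \<Rightarrow> real) \<Rightarrow> ('j \<Rightarrow> 'i \<Rightarrow> real) \<Rightarrow> 'j \<Rightarrow> 'i \<Rightarrow> real \<Rightarrow> real) \<Rightarrow> bool" where
  "ex_post_stable k I J F p B A \<longleftrightarrow>
     (\<forall>v c m tau. is_run I J F p (B v c) (A v c) m tau \<longrightarrow>
        (\<forall>i j. (i, j) \<in> F \<longrightarrow>
           u_bidder v (B v c) (A v c) m tau i + u_asker c (B v c) (A v c) m tau j
             \<ge> (v i j - c j i) / k))"

definition truthful_bids :: "('i \<Rightarrow> 'j \<Rightarrow> real) \<Rightarrow> ('j \<Rightarrow> 'i \<Rightarrow> real) \<Rightarrow> 'i \<Rightarrow> 'j \<Rightarrow> real \<Rightarrow> real" where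
  "truthful_bids v c = (\<lambda>i j t. v i j)"

definition truthful_asks :: "('i \<Rightarrow> 'j \<Rightarrow> real) \<Rightarrow> ('j \<Rightarrow> 'i \<Rightarrow> real) \<Rightarrow> 'j \<Rightarrow> 'i \<Rightarrow> real \<Rightarrow> real" where
  "truthful_asks v c = (\<lambda>j i t. c j i)"

end

theory Submission
  imports Defs
begin

text \<open>Under truthful reporting each matched agent receives exactly a quarter of the surplus of its
  pair, and that surplus cleared the (nonnegative) price at the matching time. Given a feasible pair
  with surplus \<open>s \<ge> 0\<close>, pick the time \<open>t\<close> with \<open>p t = s\<close>: at \<open>t\<close> the pair clears, so one of the two
  has already left, at a time when the price was at least \<open>s\<close>. Its quarter of the surplus is then at
  least \<open>s/4\<close>, and the partner's utility is nonnegative.\<close>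

lemma valid_price_antimono:
  assumes "valid_price p" "0 < s" "s \<le> t" "t \<le> 1"
  shows "p t \<le> p s"
  using assms unfolding valid_price_def by (cases "s = t") force+

lemma valid_price_nonneg:
  assumes "valid_price p" "0 < t" "t \<le> 1"
  shows "p t \<ge> 0"
  using valid_price_antimono[OF assms] assms(1) by (simp add: valid_price_def)

lemma valid_price_attains:
  assumes "valid_price p" "s \<ge> 0"
  obtains t where "0 < t" "t \<le> 1" "p t = s"
proof -
  have "eventually (\<lambda>x. s \<le> p x) (at_right 0)"
    using assms(1) unfolding valid_price_def filterlim_at_top by blast
  moreover have "eventually (\<lambda>x. x \<in> {0<..<1::real}) (at_right 0)"
    by (rule eventually_at_right_real) simp
  ultimately have "eventually (\<lambda>x. s \<le> p x \<and> x \<in> {0<..<1::real}) (at_right 0)"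
    by (rule eventually_conj)
  then obtain a where a: "s \<le> p a" "0 < a" "a < 1"
    using eventually_happens' trivial_limit_at_right_real by fastforce
  have "continuous_on {a..1} p"
    using assms(1) a unfolding valid_price_def by (elim conjE continuous_on_subset) auto
  moreover have "p 1 \<le> s" using assms by (simp add: valid_price_def)
  ultimately obtain t where t: "a \<le> t" "t \<le> 1" "p t = s"
    using IVT2'[of p 1 s a] a by auto
  show ?thesis using that[of t] t a by simp
qed

lemma u_bidder_truthful:
  "u_bidder v (truthful_bids v c) (truthful_asks v c) m tau i =
     (case m i of None \<Rightarrow> 0 | Some j \<Rightarrow> (v i j - c j i) / 4)"
  unfolding u_bidder_def truthful_bids_def truthful_asks_def
  by (cases "m i") (auto simp: field_simps)

lemma u_asker_truthful_matched:
  assumes "m i = Some j" and "\<And>i'. m i' = Some j \<Longrightarrow> i' = i"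
  shows "u_asker c (truthful_bids v c) (truthful_asks v c) m tau j = (v i j - c j i) / 4"
proof -
  have "(THE i'. m i' = Some j) = i" using assms by blast
  with assms(1) show ?thesis
    unfolding u_asker_def truthful_bids_def truthful_asks_def by (auto simp: Let_def field_simps)
qed

lemma u_asker_truthful_unmatched:
  assumes "\<nexists>i. m i = Some j"
  shows "u_asker c (truthful_bids v c) (truthful_asks v c) m tau j = 0"
  using assms unfolding u_asker_def by simp

lemma truthful_run_matched_surplus:
  assumes "is_run I J F p (truthful_bids v c) (truthful_asks v c) m tau" "m i = Some j"
  shows "0 < tau i" "tau i \<le> 1" "p (tau i) \<le> v i j - c j i"
  using assms unfolding is_run_def truthful_bids_def truthful_asks_def by blast+

lemma run_unique_partner:
  assumes "is_run I J F p b a m tau" "m i = Some j" "m i' = Some j"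
  shows "i' = i"
  using assms unfolding is_run_def by blast

lemma run_clearing_pair_has_left:
  assumes "is_run I J F p b a m tau" "(i, j) \<in> F" "0 < t" "t \<le> 1" "p t \<le> b i j t - a j i t"
  shows "(\<exists>j'. m i = Some j' \<and> tau i \<le> t) \<or> (\<exists>i'. m i' = Some j \<and> tau i' \<le> t)"
  using assms unfolding is_run_def by blast

lemma truthful_run_matched_surplus_nonneg:
  assumes "valid_price p" "is_run I J F p (truthful_bids v c) (truthful_asks v c) m tau"
    "m i = Some j"
  shows "v i j - c j i \<ge> 0"
  using truthful_run_matched_surplus[OF assms(2,3)] valid_price_nonneg[OF assms(1)] by force

lemma truthful_utilities_nonneg:
  assumes "valid_price p" and run: "is_run I J F p (truthful_bids v c) (truthful_asks v c) m tau"
  shows "u_bidder v (truthful_bids v c) (truthful_asks v c) m tau i \<ge> 0"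
    and "u_asker c (truthful_bids v c) (truthful_asks v c) m tau j \<ge> 0"
proof -
  show "u_bidder v (truthful_bids v c) (truthful_asks v c) m tau i \<ge> 0"
    using truthful_run_matched_surplus_nonneg[OF assms]
    by (cases "m i") (auto simp: u_bidder_truthful)
  show "u_asker c (truthful_bids v c) (truthful_asks v c) m tau j \<ge> 0"
  proof (cases "\<exists>i. m i = Some j")
    case True
    then obtain i where "m i = Some j" by blast
    with run_unique_partner[OF run] truthful_run_matched_surplus_nonneg[OF assms]
    show ?thesis by (simp add: u_asker_truthful_matched)
  qed (simp add: u_asker_truthful_unmatched)
qed

lemma truthful_run_one_side_matched_as_well:
  assumes "valid_price p" and run: "is_run I J F p (truthful_bids v c) (truthful_asks v c) m tau"
    and "(i, j) \<in> F" "v i j - c j i \<ge> 0"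
  shows "(\<exists>j'. m i = Some j' \<and> v i j' - c j' i \<ge> v i j - c j i)
       \<or> (\<exists>i'. m i' = Some j \<and> v i' j - c j i' \<ge> v i j - c j i)"
proof -
  obtain t where t: "0 < t" "t \<le> 1" "p t = v i j - c j i"
    using valid_price_attains[OF assms(1,4)] .
  have price_before_t: "p t \<le> p s" if "0 < s" "s \<le> t" for s
    using valid_price_antimono[OF assms(1) that] t(2) by simp
  have "p t \<le> truthful_bids v c i j t - truthful_asks v c j i t"
    using t(3) by (simp add: truthful_bids_def truthful_asks_def)
  with run_clearing_pair_has_left[OF run assms(3) t(1,2)] consider
      (bidder_left) j' where "m i = Some j'" "tau i \<le> t"
    | (asker_left) i' where "m i' = Some j" "tau i' \<le> t"
    by blast
  then show ?thesis
  proof cases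
    case bidder_left
    then have "p (tau i) \<le> v i j' - c j' i" "p t \<le> p (tau i)"
      using truthful_run_matched_surplus[OF run] price_before_t by blast+
    with bidder_left t(3) show ?thesis by auto
  next
    case asker_left
    then have "p (tau i') \<le> v i' j - c j i'" "p t \<le> p (tau i')"
      using truthful_run_matched_surplus[OF run] price_before_t by blast+
    with asker_left t(3) show ?thesis by auto
  qed
qed

theorem mainTheorem11:
  fixes I :: "'i set" and J :: "'j set" and F :: "('i \<times> 'j) set" and p :: "real \<Rightarrow> real"
  assumes "finite I" and "finite J" and "F \<subseteq> I \<times> J" and "valid_price p"
  shows "ex_post_stable 4 I J F p truthful_bids truthful_asks"
  unfolding ex_post_stable_def
proof (intro allI impI)
  fix v c m tau i j
  assume run: "is_run I J F p (truthful_bids v c) (truthful_asks v c) m tau" and ij: "(i, j) \<in> F"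
  let ?ui = "u_bidder v (truthful_bids v c) (truthful_asks v c) m tau i"
  let ?uj = "u_asker c (truthful_bids v c) (truthful_asks v c) m tau j"
  have nonneg: "?ui \<ge> 0" "?uj \<ge> 0"
    using truthful_utilities_nonneg[OF assms(4) run] by blast+
  show "?ui + ?uj \<ge> (v i j - c j i) / 4"
  proof (cases "v i j - c j i \<ge> 0")
    case True
    from truthful_run_one_side_matched_as_well[OF assms(4) run ij True] show ?thesis
    proof (elim disjE exE conjE)
      fix j' assume "m i = Some j'" "v i j' - c j' i \<ge> v i j - c j i"
      with nonneg(2) show ?thesis by (simp add: u_bidder_truthful field_simps)
    next
      fix i' assume "m i' = Some j" "v i' j - c j i' \<ge> v i j - c j i"
      with nonneg(1) run_unique_partner[OF run] show ?thesis
        by (simp add: u_asker_truthful_matched field_simps)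
    qed
  qed (use nonneg in auto)
qed

end
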